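(* Let $\bm{\mu}$ be the true mean vector, let $\delta\in(0,1)$ and $T^*=\log(1/\delta)/d_{s_0}(\bm{\mu})$. Suppose that at round $t$ (after every leaf has been drawn at least once) $\hat{\bm{\mu}}(t)=\bm{\mu}$, and the next leaf is selected by the ratio-based rule $I(t+1)\in\arg\max_{\ell\in\mathcal{L}(\mathcal{T})}w^{s_0}_\ell(\hat{\bm{\mu}}(t))/N_\ell(t)$ (the non-forced-exploration case of RD-Tracking-TMCTS). Then the selected leaf $\ell$ does not satisfy $N_\ell(t)>T^*w^{s_0}_\ell(\bm{\mu})$, unless $N_{\ell'}(t)>T^*w^{s_0}_{\ell'}(\bm{\mu})$ holds for all leaves $\ell'\in\mathcal{L}(\mathcal{T})$.
   Context: $\mathcal{T}$ is a finite rooted tree with node set $S$, root $s_0$, children $\mathcal{C}(s)$, leaves $\mathcal{L}(\mathcal{T})$, $\mathcal{D}(s)$ leaves descending from $s$; internal labels $L(s)\in\{\text{MAX},\text{MIN}\}$. $X\subseteq\mathbb{R}$ mean-parameter set of a one-parameter exponential family; $d(x,y)$ KL divergence; threshold $\theta\in X$. $V_s$ is the leaf mean at leaves and max/min of children's values at MAX/MIN nodes; $a_s=$'win' iff $V_s\ge\theta$. Recursive weights at a mean vector $\bm{\mu}$: $a^*=a_{s_0}(\bm{\mu})$; $P=$MAX, $Q=$MIN if $a^*=$'win', swapped if 'lose'. Leaf $s$: $w^s_s=1$, $d_s=d(\mu_s,\theta)$ if ($a^*=$'win', $\mu_s\ge\theta$) or ($a^*=$'lose', $\mu_s<\theta$),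 else $0$. $L(s)=P$: $d_s=\max_c d_c$, fixed $c^*(s)\in\arg\max_c d_c$, if $d_s>0$: $w^s=w^{c^*(s)}$ on $\mathcal{D}(c^*(s))$, $0$ elsewhere. $L(s)=Q$, all $d_c>0$: $d_s=(\sum_c1/d_c)^{-1}$, $w^s_\ell=\frac{w^c_\ell/d_c}{\sum_{c'}1/d_{c'}}$ on $\mathcal{D}(c)$. $L(s)=Q$ otherwise: $d_s=0$. Internal $s$ with $d_s=0$: $\bm{w}^s$ fixed arbitrary probability vector (the same fixed choices are used by the algorithm). $N_\ell(t)$ is the number of draws of leaf $\ell$ up to round $t$ and $\hat\mu_\ell(t)$ its empirical mean. *)

theory Defs
  imports "HOL-Probability.Probability"
begin

text \<open>A one-parameter (natural) exponential family generated by a base measure nu on the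
reals: densities exp(eta x - A(eta)) w.r.t. nu, where A is the log-partition function.\<close>

definition log_partition :: "real measure \<Rightarrow> real \<Rightarrow> real" where
  "log_partition \<nu> \<eta> = ln (enn2real (\<integral>\<^sup>+ x. ennreal (exp (\<eta> * x)) \<partial>\<nu>))"

definition nat_params :: "real measure \<Rightarrow> real set" where
  "nat_params \<nu> = interior {\<eta>. (\<integral>\<^sup>+ x. ennreal (exp (\<eta> * x)) \<partial>\<nu>) < \<infinity>}"

definition expfam_base :: "real measure \<Rightarrow> bool" where
  "expfam_base \<nu> \<longleftrightarrow> sets \<nu> = sets borel \<and> nat_params \<nu> \<noteq> {} \<and> (\<forall>c. \<not> (AE x in \<nu>. x = c))"

definition mean_params :: "real measure \<Rightarrow> real set" where
  "mean_params \<nu> = (\<lambda>\<eta>. deriv (log_partition \<nu>) \<eta>) ` nat_params \<nu>"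

definition nat_of_mean :: "real measure \<Rightarrow> real \<Rightarrow> real" where
  "nat_of_mean \<nu> x = (THE \<eta>. \<eta> \<in> nat_params \<nu> \<and> deriv (log_partition \<nu>) \<eta> = x)"

text \<open>KL divergence d(x,y) = KL(P_{eta(x)} || P_{eta(y)}) = A(eta_y) - A(eta_x) - x (eta_y - eta_x).\<close>
definition expfam_kl :: "real measure \<Rightarrow> real \<Rightarrow> real \<Rightarrow> real" where
  "expfam_kl \<nu> x y =
     (let \<eta>1 = nat_of_mean \<nu> x; \<eta>2 = nat_of_mean \<nu> y
      in log_partition \<nu> \<eta>2 - log_partition \<nu> \<eta>1 - x * (\<eta>2 - \<eta>1))"

datatype label = LMAX | LMIN

text \<open>A node is identified with the subtree rooted at it; leaves carry their identifiers.\<close>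
datatype 'l gtree = Leaf 'l | Node label "'l gtree list"

fun leaves :: "'l gtree \<Rightarrow> 'l list" where
  "leaves (Leaf l) = [l]"
| "leaves (Node L cs) = concat (map leaves cs)"

fun wf_gtree :: "'l gtree \<Rightarrow> bool" where
  "wf_gtree (Leaf l) = True"
| "wf_gtree (Node L cs) = (cs \<noteq> [] \<and> (\<forall>c\<in>set cs. wf_gtree c))"

definition game_tree :: "'l gtree \<Rightarrow> bool" where
  "game_tree t \<longleftrightarrow> wf_gtree t \<and> distinct (leaves t)"

fun subtrees :: "'l gtree \<Rightarrow> 'l gtree set" where
  "subtrees (Leaf l) = {Leaf l}"
| "subtrees (Node L cs) = insert (Node L cs) (\<Union> (subtrees ` set cs))"

fun val :: "('l \<Rightarrow> real) \<Rightarrow> 'l gtree \<Rightarrow> real" where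
  "val \<mu> (Leaf l) = \<mu> l"
| "val \<mu> (Node L cs) =
     (if L = LMAX then Max (set (map (val \<mu>) cs)) else Min (set (map (val \<mu>) cs)))"

definition win :: "real \<Rightarrow> ('l \<Rightarrow> real) \<Rightarrow> 'l gtree \<Rightarrow> bool" where
  "win \<theta> \<mu> t \<longleftrightarrow> val \<mu> t \<ge> \<theta>"

text \<open>Recursive complexities d_s; parameter w = (a^* = win), kl = d.
  A node label L equals P iff (L = LMAX) = w.\<close>
fun dv :: "(real \<Rightarrow> real \<Rightarrow> real) \<Rightarrow> real \<Rightarrow> bool \<Rightarrow> ('l \<Rightarrow> real) \<Rightarrow> 'l gtree \<Rightarrow> real" where
  "dv kl \<theta> w \<mu> (Leaf l) =
     (if (w \<and> \<mu> l \<ge> \<theta>) \<or> (\<not> w \<and> \<mu> l < \<theta>) then kl (\<mu> l) \<theta> else 0)"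
| "dv kl \<theta> w \<mu> (Node L cs) =
     (if (L = LMAX) = w then Max (set (map (dv kl \<theta> w \<mu>) cs))
      else if (\<forall>c\<in>set cs. dv kl \<theta> w \<mu> c > 0)
        then inverse (sum_list (map (\<lambda>c. 1 / dv kl \<theta> w \<mu> c) cs))
      else 0)"

lemma size_mem_lt: "x \<in> set cs \<Longrightarrow> size x < Suc (size_list size cs)"
  by (induction cs) auto

text \<open>Recursive weights w^s (a vector indexed by leaf identifiers, zero outside D(s)).
  cstar s is the index of the fixed maximizing child c^*(s) of a P-node s;
  wdef s is the fixed arbitrary probability vector used at internal nodes with d_s = 0.\<close>
function wv :: "(real \<Rightarrow> real \<Rightarrow> real) \<Rightarrow> real \<Rightarrow> bool \<Rightarrow> ('l gtree \<Rightarrow> nat) \<Rightarrow>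
    ('l gtree \<Rightarrow> 'l \<Rightarrow> real) \<Rightarrow> ('l \<Rightarrow> real) \<Rightarrow> 'l gtree \<Rightarrow> 'l \<Rightarrow> real" where
  "wv kl \<theta> w cstar wdef \<mu> (Leaf l) = (\<lambda>x. if x = l then 1 else 0)"
| "wv kl \<theta> w cstar wdef \<mu> (Node L cs) =
     (if dv kl \<theta> w \<mu> (Node L cs) = 0 then wdef (Node L cs)
      else if (L = LMAX) = w then
        (if cstar (Node L cs) < length cs
         then wv kl \<theta> w cstar wdef \<mu> (cs ! cstar (Node L cs)) else (\<lambda>x. 0))
      else (\<lambda>x. sum_list (map (\<lambda>c. wv kl \<theta> w cstar wdef \<mu> c x / dv kl \<theta> w \<mu> c) cs)
                 / sum_list (map (\<lambda>c. 1 / dv kl \<theta> w \<mu> c) cs)))"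
  by pat_completeness auto
termination
  by (relation "Wellfounded.measure (\<lambda>(_,_,_,_,_,_,t). size t)")
     (auto simp del: size_list_estimation' intro: size_mem_lt nth_mem)

definition valid_cstar :: "(real \<Rightarrow> real \<Rightarrow> real) \<Rightarrow> real \<Rightarrow> bool \<Rightarrow> ('l \<Rightarrow> real) \<Rightarrow>
    ('l gtree \<Rightarrow> nat) \<Rightarrow> 'l gtree \<Rightarrow> bool" where
  "valid_cstar kl \<theta> w \<mu> cstar t \<longleftrightarrow>
     (\<forall>L cs. Node L cs \<in> subtrees t \<longrightarrow> (L = LMAX) = w \<longrightarrow>
        cstar (Node L cs) < length cs \<and>
        dv kl \<theta> w \<mu> (cs ! cstar (Node L cs)) = dv kl \<theta> w \<mu> (Node L cs))"

definition valid_wdef :: "('l gtree \<Rightarrow> 'l \<Rightarrow> real) \<Rightarrow> 'l gtree \<Rightarrow> bool" where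
  "valid_wdef wdef t \<longleftrightarrow>
     (\<forall>L cs. Node L cs \<in> subtrees t \<longrightarrow>
        (\<forall>x. wdef (Node L cs) x \<ge> 0) \<and>
        (\<forall>x. x \<notin> set (leaves (Node L cs)) \<longrightarrow> wdef (Node L cs) x = 0) \<and>
        (\<Sum>x\<in>set (leaves (Node L cs)). wdef (Node L cs) x) = 1)"

definition d_root :: "real measure \<Rightarrow> real \<Rightarrow> ('l \<Rightarrow> real) \<Rightarrow> 'l gtree \<Rightarrow> real" where
  "d_root \<nu> \<theta> \<mu> t = dv (expfam_kl \<nu>) \<theta> (win \<theta> \<mu> t) \<mu> t"

definition w_root :: "real measure \<Rightarrow> real \<Rightarrow> ('l gtree \<Rightarrow> nat) \<Rightarrow> ('l gtree \<Rightarrow> 'l \<Rightarrow> real) \<Rightarrow>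
    ('l \<Rightarrow> real) \<Rightarrow> 'l gtree \<Rightarrow> 'l \<Rightarrow> real" where
  "w_root \<nu> \<theta> cstar wdef \<mu> t = wv (expfam_kl \<nu>) \<theta> (win \<theta> \<mu> t) cstar wdef \<mu> t"

end

theory Submission
  imports Defs
begin

text \<open>Values, complexities and weights of a subtree depend only on the means of its leaves,
  so once the empirical means equal the true ones the algorithm's weights are w(\<mu>). The
  selected leaf maximises w_l / N_l; if it is oversampled, w_l / N_l < 1 / T*, then every ratio
  is below 1 / T* and every leaf is oversampled.\<close>

lemma val_cong_leaves:
  "(\<And>l. l \<in> set (leaves s) \<Longrightarrow> \<mu> l = \<mu>' l) \<Longrightarrow> val \<mu> s = val \<mu>' s"
proof (induction s)
  case (Node L cs)
  then have "val \<mu> c = val \<mu>' c" if "c \<in> set cs" for c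
    using that by auto
  then show ?case by (simp cong: image_cong)
qed simp

lemma dv_cong_leaves:
  "(\<And>l. l \<in> set (leaves s) \<Longrightarrow> \<mu> l = \<mu>' l) \<Longrightarrow> dv kl \<theta> w \<mu> s = dv kl \<theta> w \<mu>' s"
proof (induction s)
  case (Node L cs)
  then have "dv kl \<theta> w \<mu> c = dv kl \<theta> w \<mu>' c" if "c \<in> set cs" for c
    using that by auto
  then show ?case by (simp cong: image_cong map_cong ball_cong)
qed simp

lemma wv_cong_leaves:
  "(\<And>l. l \<in> set (leaves s) \<Longrightarrow> \<mu> l = \<mu>' l) \<Longrightarrow>
   wv kl \<theta> w cstar wdef \<mu> s = wv kl \<theta> w cstar wdef \<mu>' s"
proof (induction s)
  case (Node L cs)
  have dv_eq: "dv kl \<theta> w \<mu> c = dv kl \<theta> w \<mu>' c" if "c \<in> set cs" for c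
    using Node.prems that by (intro dv_cong_leaves) auto
  have wv_eq: "wv kl \<theta> w cstar wdef \<mu> c = wv kl \<theta> w cstar wdef \<mu>' c" if "c \<in> set cs" for c
    using Node that by auto
  have "dv kl \<theta> w \<mu> (Node L cs) = dv kl \<theta> w \<mu>' (Node L cs)"
    using Node.prems by (rule dv_cong_leaves)
  then show ?case
    using dv_eq wv_eq by (auto cong: map_cong)
qed simp

lemma valid_wdef_child: "valid_wdef wdef (Node L cs) \<Longrightarrow> c \<in> set cs \<Longrightarrow> valid_wdef wdef c"
proof -
  assume "c \<in> set cs"
  then have "subtrees c \<subseteq> subtrees (Node L cs)" by auto
  moreover assume "valid_wdef wdef (Node L cs)"
  ultimately show ?thesis unfolding valid_wdef_def by blast
qed

lemma wv_nonneg: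
  assumes "valid_wdef wdef s"
  shows "0 \<le> wv kl \<theta> w cstar wdef \<mu> s x"
  using assms
proof (induction s)
  case (Node L cs)
  have children: "0 \<le> wv kl \<theta> w cstar wdef \<mu> c x" if "c \<in> set cs" for c
    using Node valid_wdef_child that by blast
  show ?case
  proof (cases "dv kl \<theta> w \<mu> (Node L cs) = 0")
    case True
    then show ?thesis using Node.prems unfolding valid_wdef_def by auto
  next
    case nonzero: False
    show ?thesis
    proof (cases "(L = LMAX) = w")
      case True
      then show ?thesis using nonzero children by simp
    next
      case False
      then have "\<forall>c\<in>set cs. 0 < dv kl \<theta> w \<mu> c"
        using nonzero by (auto split: if_splits)
      then have "0 \<le> dv kl \<theta> w \<mu> c" if "c \<in> set cs" for c
        using that by (simp add: less_imp_le)
      then show ?thesis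
        using nonzero False children by (auto intro!: divide_nonneg_nonneg sum_list_nonneg)
    qed
  qed
qed simp

lemma scaled_less_of_max_ratio:
  fixes W N :: "'a \<Rightarrow> real"
  assumes max: "\<forall>l\<in>A. W l / N l \<le> W k / N k" and k: "k \<in> A"
    and W: "\<forall>l\<in>A. 0 \<le> W l" and N: "\<forall>l\<in>A. 0 < N l"
    and less: "c * W k < N k"
  shows "\<forall>l\<in>A. c * W l < N l"
proof
  fix l assume l: "l \<in> A"
  with N have Nl: "0 < N l" by blast
  show "c * W l < N l"
  proof (cases "c \<le> 0")
    case True
    then show ?thesis using W N l by (meson mult_nonpos_nonneg order_le_less_trans)
  next
    case False
    have "c * W l = c * (W l / N l) * N l"
      using Nl by simp
    also have "\<dots> \<le> c * (W k / N k) * N l"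
      using max l False Nl by (intro mult_right_mono mult_left_mono) auto
    also have "\<dots> < N l"
      using less N k Nl by (simp add: field_simps)
    finally show ?thesis .
  qed
qed

theorem lemma1:
  fixes \<nu> :: "real measure" and t :: "'l gtree" and \<theta> \<delta> :: real
    and \<mu> \<mu>hat :: "'l \<Rightarrow> real" and N :: "'l \<Rightarrow> nat" and lsel :: 'l
    and cstar :: "'l gtree \<Rightarrow> nat" and wdef :: "'l gtree \<Rightarrow> 'l \<Rightarrow> real"
  assumes fam: "expfam_base \<nu>"
    and tree: "game_tree t"
    and theta: "\<theta> \<in> mean_params \<nu>"
    and means: "\<forall>l\<in>set (leaves t). \<mu> l \<in> mean_params \<nu>"
    and cstar: "valid_cstar (expfam_kl \<nu>) \<theta> (win \<theta> \<mu>hat t) \<mu>hat cstar t"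
    and wdef: "valid_wdef wdef t"
    and delta: "0 < \<delta>" "\<delta> < 1"
    and drawn: "\<forall>l\<in>set (leaves t). N l \<ge> 1"
    and emp: "\<forall>l\<in>set (leaves t). \<mu>hat l = \<mu> l"
    and sel: "lsel \<in> set (leaves t)"
    and ratio: "\<forall>l'\<in>set (leaves t).
        w_root \<nu> \<theta> cstar wdef \<mu>hat t l' / real (N l') \<le> w_root \<nu> \<theta> cstar wdef \<mu>hat t lsel / real (N lsel)"
  shows "let Tstar = ln (1 / \<delta>) / d_root \<nu> \<theta> \<mu> t in
         real (N lsel) > Tstar * w_root \<nu> \<theta> cstar wdef \<mu> t lsel \<longrightarrow>
         (\<forall>l'\<in>set (leaves t). real (N l') > Tstar * w_root \<nu> \<theta> cstar wdef \<mu> t l')"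
proof -
  define W where "W = w_root \<nu> \<theta> cstar wdef \<mu> t"
  have "val \<mu>hat t = val \<mu> t"
    using emp by (intro val_cong_leaves) blast
  then have "win \<theta> \<mu>hat t = win \<theta> \<mu> t"
    unfolding win_def by simp
  moreover have "wv kl \<theta> w cstar wdef \<mu>hat t = wv kl \<theta> w cstar wdef \<mu> t" for kl w
    using emp by (intro wv_cong_leaves) blast
  ultimately have "w_root \<nu> \<theta> cstar wdef \<mu>hat t = W"
    unfolding W_def w_root_def by simp
  then have max: "\<forall>l\<in>set (leaves t). W l / real (N l) \<le> W lsel / real (N lsel)"
    using ratio by simp
  have W_nonneg: "\<forall>l\<in>set (leaves t). 0 \<le> W l"
    unfolding W_def w_root_def using wv_nonneg[OF wdef] by blast
  have N_pos: "\<forall>l\<in>set (leaves t). 0 < real (N l)"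
    using drawn by force
  show ?thesis
    unfolding Let_def W_def[symmetric]
    using scaled_less_of_max_ratio[OF max sel W_nonneg N_pos] by blast
qed

end
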